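(* Let $G=(V,E)$ be a graph with a partition $(V_1,V_2)$ of $V$ such that $G[V_1]$ and $G[V_2]$ are $P_5$-free. Let $C$ be a connected component of $G[V_2]$ and let $X=V(C)\cap N(V_1)$, where $N(V_1)$ is the set of vertices having a neighbour in $V_1$. Let $F\subseteq V_2$ be a set such that $G\setminus F$ is $P_5$-free and $|F\cap V(C)|\ge|X|$. Then $F'=(F\setminus V(C))\cup X$ satisfies that $G\setminus F'$ is $P_5$-free, and $|F'|\le|F|$.
   Context: Graphs are finite, simple and undirected. A $P_5$ is a path on $5$ vertices (as a not necessarily induced subgraph); a graph is $P_5$-free if it contains no $P_5$. $G[X]$ denotes the subgraph induced by $X$, and $G\setminus F=G[V\setminus F]$. *)

theory Defs
  imports Main
begin

definition graph :: "'a set \<Rightarrow> ('a \<Rightarrow> 'a \<Rightarrow> bool) \<Rightarrow> bool" where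
  "graph V E \<longleftrightarrow> finite V \<and> (\<forall>x y. E x y \<longrightarrow> E y x) \<and> (\<forall>x. \<not> E x x)
     \<and> (\<forall>x y. E x y \<longrightarrow> x \<in> V \<and> y \<in> V)"

text \<open>The induced subgraph G[S] contains a P5 (not necessarily induced):
  five distinct vertices of S, consecutive ones adjacent.\<close>
definition has_P5 :: "('a \<Rightarrow> 'a \<Rightarrow> bool) \<Rightarrow> 'a set \<Rightarrow> bool" where
  "has_P5 E S \<longleftrightarrow> (\<exists>v1 v2 v3 v4 v5. distinct [v1, v2, v3, v4, v5]
     \<and> {v1, v2, v3, v4, v5} \<subseteq> S \<and> E v1 v2 \<and> E v2 v3 \<and> E v3 v4 \<and> E v4 v5)"

definition P5_free :: "('a \<Rightarrow> 'a \<Rightarrow> bool) \<Rightarrow> 'a set \<Rightarrow> bool" where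
  "P5_free E S \<longleftrightarrow> \<not> has_P5 E S"

definition adj_in :: "('a \<Rightarrow> 'a \<Rightarrow> bool) \<Rightarrow> 'a set \<Rightarrow> 'a \<Rightarrow> 'a \<Rightarrow> bool" where
  "adj_in E S x y \<longleftrightarrow> x \<in> S \<and> y \<in> S \<and> E x y"

definition component_of :: "('a \<Rightarrow> 'a \<Rightarrow> bool) \<Rightarrow> 'a set \<Rightarrow> 'a \<Rightarrow> 'a set" where
  "component_of E S x = {y \<in> S. (adj_in E S)\<^sup>*\<^sup>* x y}"

definition is_component :: "('a \<Rightarrow> 'a \<Rightarrow> bool) \<Rightarrow> 'a set \<Rightarrow> 'a set \<Rightarrow> bool" where
  "is_component E S C \<longleftrightarrow> (\<exists>x\<in>S. C = component_of E S x)"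

definition nbhd :: "'a set \<Rightarrow> ('a \<Rightarrow> 'a \<Rightarrow> bool) \<Rightarrow> 'a set \<Rightarrow> 'a set" where
  "nbhd V E A = {v \<in> V. \<exists>u\<in>A. E v u}"

end

theory Submission
  imports Defs
begin

(* Outside X, the component C is attached to the rest of G only through edges to V1, so in
   G \ F' no edge joins C - X to a vertex outside C. A P5 is connected, hence lies entirely
   in C - X, a subgraph of G[V2], or entirely outside C, where F' agrees with F. Swapping
   F \<inter> C for X does not increase the size since |X| \<le> |F \<inter> C|. *)

lemma has_P5I:
  "distinct [v1, v2, v3, v4, v5] \<Longrightarrow> {v1, v2, v3, v4, v5} \<subseteq> S \<Longrightarrow>
    E v1 v2 \<Longrightarrow> E v2 v3 \<Longrightarrow> E v3 v4 \<Longrightarrow> E v4 v5 \<Longrightarrow> has_P5 E S"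
  unfolding has_P5_def by (intro exI conjI)

lemma has_P5_mono: "has_P5 E S \<Longrightarrow> S \<subseteq> T \<Longrightarrow> has_P5 E T"
  unfolding has_P5_def by (meson subset_trans)

lemma has_P5_split:
  assumes "has_P5 E S"
    and no_cross: "\<And>u w. u \<in> S \<Longrightarrow> w \<in> S \<Longrightarrow> E u w \<Longrightarrow> u \<in> C \<longleftrightarrow> w \<in> C"
  shows "has_P5 E (S \<inter> C) \<or> has_P5 E (S - C)"
proof -
  obtain v1 v2 v3 v4 v5 where d: "distinct [v1, v2, v3, v4, v5]"
    and sub: "{v1, v2, v3, v4, v5} \<subseteq> S"
    and e: "E v1 v2" "E v2 v3" "E v3 v4" "E v4 v5"
    using assms(1) unfolding has_P5_def by blast
  have "v1 \<in> C \<longleftrightarrow> v2 \<in> C" "v2 \<in> C \<longleftrightarrow> v3 \<in> C" "v3 \<in> C \<longleftrightarrow> v4 \<in> C" "v4 \<in> C \<longleftrightarrow> v5 \<in> C"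
    using no_cross e sub by auto
  then have "{v1, v2, v3, v4, v5} \<subseteq> S \<inter> C \<or> {v1, v2, v3, v4, v5} \<subseteq> S - C"
    using sub by auto
  then show ?thesis
    using has_P5I[OF d _ e] by blast
qed

lemma component_of_edge_closed:
  assumes "u \<in> component_of E S x" "w \<in> S" "E u w"
  shows "w \<in> component_of E S x"
proof -
  have "(adj_in E S)\<^sup>*\<^sup>* x u" "u \<in> S"
    using assms(1) unfolding component_of_def by auto
  moreover have "adj_in E S u w"
    using \<open>u \<in> S\<close> assms(2,3) unfolding adj_in_def by auto
  ultimately show ?thesis
    using assms(2) unfolding component_of_def by (auto intro: rtranclp.rtrancl_into_rtrancl)
qed

lemma component_edge_outside_nbhd:
  assumes "graph V E" "V1 \<union> V2 = V" "is_component E V2 C"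
    and "u \<in> C" "u \<notin> nbhd V E V1" "E u w"
  shows "w \<in> C"
proof -
  obtain x where C: "C = component_of E V2 x"
    using assms(3) unfolding is_component_def by auto
  have "u \<in> V" "w \<in> V"
    using assms(1,6) unfolding graph_def by auto
  then have "w \<notin> V1"
    using assms(5,6) unfolding nbhd_def by auto
  then have "w \<in> V2"
    using \<open>w \<in> V\<close> assms(2) by auto
  then show ?thesis
    using component_of_edge_closed assms(4,6) C by metis
qed

lemma card_exchange_le:
  assumes "finite F" "finite Y" "card Y \<le> card (F \<inter> C)"
  shows "card ((F - C) \<union> Y) \<le> card F"
proof -
  have "card ((F - C) \<union> Y) \<le> card (F - C) + card Y"
    by (rule card_Un_le)
  also have "\<dots> \<le> card (F - C) + card (F \<inter> C)"
    using assms(3) by simp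
  also have "\<dots> = card ((F - C) \<union> (F \<inter> C))"
    using assms(1) by (simp add: card_Un_disjoint disjoint_iff)
  also have "(F - C) \<union> (F \<inter> C) = F"
    by blast
  finally show ?thesis .
qed

theorem lemma12:
  fixes V V1 V2 C F :: "'a set" and E :: "'a \<Rightarrow> 'a \<Rightarrow> bool"
  assumes "graph V E"
    and "V1 \<union> V2 = V" and "V1 \<inter> V2 = {}"
    and "P5_free E V1" and "P5_free E V2"
    and "is_component E V2 C"
    and "F \<subseteq> V2"
    and "P5_free E (V - F)"
    and "card (F \<inter> C) \<ge> card (C \<inter> nbhd V E V1)"
  shows "P5_free E (V - ((F - C) \<union> (C \<inter> nbhd V E V1)))
      \<and> card ((F - C) \<union> (C \<inter> nbhd V E V1)) \<le> card F"
proof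
  let ?X = "C \<inter> nbhd V E V1"
  let ?S = "V - ((F - C) \<union> ?X)"
  have "C \<subseteq> V2"
    using assms(6) unfolding is_component_def component_of_def by auto
  have sym: "E w u" if "E u w" for u w
    using assms(1) that unfolding graph_def by blast
  have "u \<in> C \<longleftrightarrow> w \<in> C" if "u \<in> ?S" "w \<in> ?S" "E u w" for u w
    using component_edge_outside_nbhd[OF assms(1,2,6)] sym that by blast
  moreover have "\<not> has_P5 E (?S \<inter> C)"
    using assms(5) has_P5_mono \<open>C \<subseteq> V2\<close> unfolding P5_free_def by blast
  moreover have "\<not> has_P5 E (?S - C)"
    using assms(8) has_P5_mono unfolding P5_free_def by blast
  ultimately show "P5_free E ?S"
    unfolding P5_free_def using has_P5_split by blast
  have "finite V2"
    using assms(1,2) unfolding graph_def by auto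
  then show "card ((F - C) \<union> ?X) \<le> card F"
    using card_exchange_le assms(7,9) \<open>C \<subseteq> V2\<close> by (meson finite_Int finite_subset)
qed

end
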